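(* For every cubic graph $G$ that contains a perfect matching, $\nu_2(G) \geq \frac{20}{21}\cdot \frac{|V(G)| + 2\cdot \nu_3(G)}{4}$.
   Context: Graphs are finite, without loops, possibly with multiple edges; a graph is cubic if every vertex has degree $3$. For $k\geq 1$, $\nu_k(G)$ is the maximum number of edges of a $k$-edge-colorable subgraph of $G$. *)

theory Defs
  imports Complex_Main
begin

text \<open>A finite multigraph without loops: vertex set V, edge set E (edges are
  abstract objects, so parallel edges are allowed), and an endpoint map
  assigning to each edge a set of exactly two vertices.\<close>

definition multigraph :: "'v set \<Rightarrow> 'e set \<Rightarrow> ('e \<Rightarrow> 'v set) \<Rightarrow> bool" where
  "multigraph V E ends \<longleftrightarrow> finite V \<and> finite E \<and>
     (\<forall>e\<in>E. ends e \<subseteq> V \<and> card (ends e) = 2)"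

definition degree :: "'e set \<Rightarrow> ('e \<Rightarrow> 'v set) \<Rightarrow> 'v \<Rightarrow> nat" where
  "degree E ends v = card {e\<in>E. v \<in> ends e}"

definition cubic :: "'v set \<Rightarrow> 'e set \<Rightarrow> ('e \<Rightarrow> 'v set) \<Rightarrow> bool" where
  "cubic V E ends \<longleftrightarrow> multigraph V E ends \<and> (\<forall>v\<in>V. degree E ends v = 3)"

definition perfect_matching :: "'v set \<Rightarrow> 'e set \<Rightarrow> ('e \<Rightarrow> 'v set) \<Rightarrow> 'e set \<Rightarrow> bool" where
  "perfect_matching V E ends M \<longleftrightarrow> M \<subseteq> E \<and>
     (\<forall>v\<in>V. card {e\<in>M. v \<in> ends e} = 1)"

definition edge_colorable :: "('e \<Rightarrow> 'v set) \<Rightarrow> nat \<Rightarrow> 'e set \<Rightarrow> bool" where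
  "edge_colorable ends k F \<longleftrightarrow> (\<exists>c :: 'e \<Rightarrow> nat.
     (\<forall>e\<in>F. c e < k) \<and>
     (\<forall>e\<in>F. \<forall>f\<in>F. e \<noteq> f \<and> ends e \<inter> ends f \<noteq> {} \<longrightarrow> c e \<noteq> c f))"

definition nu :: "nat \<Rightarrow> 'e set \<Rightarrow> ('e \<Rightarrow> 'v set) \<Rightarrow> nat" where
  "nu k E ends = Max {card F | F. F \<subseteq> E \<and> edge_colorable ends k F}"

end

theory Submission
  imports Defs
begin

text \<open>Deleting a perfect matching M from a cubic graph leaves a 2-regular subgraph, in which
  every edge meets at most two others, so it is 3-edge-colourable greedily. Its largest colour
  class has at least |V|/3 edges and, together with M (|V|/2 edges), forms a 2-edge-colourable
  subgraph; hence 6 \<nu>_2 \<ge> 5 |V|. Deleting the smallest colour class of a maximum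
  3-edge-colourable subgraph gives 3 \<nu>_2 \<ge> 2 \<nu>_3. Therefore
  |V| + 2 \<nu>_3 \<le> (6/5 + 3) \<nu>_2 = 21/5 \<nu>_2.\<close>

lemma exists_le_average:
  fixes f :: "nat \<Rightarrow> nat"
  assumes "0 < k"
  obtains j where "j < k" "k * f j \<le> (\<Sum>i<k. f i)"
proof -
  have "Min (f ` {..<k}) \<in> f ` {..<k}" using assms by (intro Min_in) auto
  then obtain j where j: "j < k" "f j = Min (f ` {..<k})" by auto
  then have "f j \<le> f i" if "i < k" for i using that by simp
  then have "card {..<k} * f j \<le> (\<Sum>i<k. f i)" using sum_bounded_below[of "{..<k}" "f j" f] by simp
  with j show ?thesis using that by simp
qed

lemma exists_ge_average:
  fixes f :: "nat \<Rightarrow> nat"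
  assumes "0 < k"
  obtains j where "j < k" "(\<Sum>i<k. f i) \<le> k * f j"
proof -
  have "Max (f ` {..<k}) \<in> f ` {..<k}" using assms by (intro Max_in) auto
  then obtain j where j: "j < k" "f j = Max (f ` {..<k})" by auto
  then have "f i \<le> f j" if "i < k" for i using that by simp
  then have "(\<Sum>i<k. f i) \<le> card {..<k} * f j" using sum_bounded_above[of "{..<k}" f "f j"] by simp
  with j show ?thesis using that by simp
qed

definition proper_edge_coloring :: "('e \<Rightarrow> 'v set) \<Rightarrow> nat \<Rightarrow> 'e set \<Rightarrow> ('e \<Rightarrow> nat) \<Rightarrow> bool" where
  "proper_edge_coloring ends k F c \<longleftrightarrow> (\<forall>e\<in>F. c e < k) \<and>
     (\<forall>e\<in>F. \<forall>f\<in>F. e \<noteq> f \<and> ends e \<inter> ends f \<noteq> {} \<longrightarrow> c e \<noteq> c f)"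

lemma edge_colorable_iff_proper_edge_coloring:
  "edge_colorable ends k F \<longleftrightarrow> (\<exists>c. proper_edge_coloring ends k F c)"
  by (simp add: edge_colorable_def proper_edge_coloring_def)

lemma card_eq_sum_color_classes:
  assumes "finite F" "proper_edge_coloring ends k F c"
  shows "card F = (\<Sum>j<k. card {e\<in>F. c e = j})"
proof -
  have "c ` F \<subseteq> {..<k}" using assms(2) by (auto simp: proper_edge_coloring_def)
  then show ?thesis using sum.group[OF assms(1) finite_lessThan, where g=c and h="\<lambda>_. 1::nat"] by simp
qed

lemma edge_colorable_color_class:
  assumes "proper_edge_coloring ends k F c"
  shows "edge_colorable ends 1 {e\<in>F. c e = j}"
  using assms unfolding edge_colorable_def proper_edge_coloring_def
  by (intro exI[of _ "\<lambda>_. 0"]) blast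

lemma edge_colorable_drop_color:
  assumes "proper_edge_coloring ends (Suc k) F c" "j < Suc k"
  shows "edge_colorable ends k {e\<in>F. c e \<noteq> j}"
  unfolding edge_colorable_def
proof (intro exI[of _ "\<lambda>e. if c e < j then c e else c e - 1"] conjI ballI impI)
  fix e assume "e \<in> {e\<in>F. c e \<noteq> j}"
  then show "(if c e < j then c e else c e - 1) < k"
    using assms by (auto simp: proper_edge_coloring_def)
next
  fix e f assume "e \<in> {e\<in>F. c e \<noteq> j}" "f \<in> {e\<in>F. c e \<noteq> j}" "e \<noteq> f \<and> ends e \<inter> ends f \<noteq> {}"
  then have "c e \<noteq> c f" "c e \<noteq> j" "c f \<noteq> j"
    using assms(1) by (auto simp: proper_edge_coloring_def)
  then show "(if c e < j then c e else c e - 1) \<noteq> (if c f < j then c f else c f - 1)"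
    by auto
qed

lemma large_color_class:
  assumes "finite F" "0 < k" "edge_colorable ends k F"
  obtains K where "K \<subseteq> F" "edge_colorable ends 1 K" "card F \<le> k * card K"
proof -
  obtain c where c: "proper_edge_coloring ends k F c"
    using assms(3) by (auto simp: edge_colorable_iff_proper_edge_coloring)
  obtain j where "(\<Sum>i<k. card {e\<in>F. c e = i}) \<le> k * card {e\<in>F. c e = j}"
    by (rule exists_ge_average[OF assms(2)])
  then have "card F \<le> k * card {e\<in>F. c e = j}"
    using card_eq_sum_color_classes[OF assms(1) c] by simp
  then show ?thesis
    using edge_colorable_color_class[OF c] by (intro that[of "{e\<in>F. c e = j}"]) auto
qed

lemma drop_small_color_class:
  assumes "finite F" "edge_colorable ends (Suc k) F"
  obtains F' where "F' \<subseteq> F" "edge_colorable ends k F'" "k * card F \<le> Suc k * card F'"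
proof -
  obtain c where c: "proper_edge_coloring ends (Suc k) F c"
    using assms(2) by (auto simp: edge_colorable_iff_proper_edge_coloring)
  obtain j where j: "j < Suc k"
    and "Suc k * card {e\<in>F. c e = j} \<le> (\<Sum>i<Suc k. card {e\<in>F. c e = i})"
    by (rule exists_le_average[of "Suc k"]) simp
  then have small: "Suc k * card {e\<in>F. c e = j} \<le> card F"
    using card_eq_sum_color_classes[OF assms(1) c] by simp
  have "card F = card {e\<in>F. c e \<noteq> j} + card {e\<in>F. c e = j}"
    using assms(1) by (subst card_Un_disjoint[symmetric]) (auto intro: arg_cong[where f=card])
  with small have "k * card F \<le> Suc k * card {e\<in>F. c e \<noteq> j}"
    by (simp add: algebra_simps)
  then show ?thesis
    using edge_colorable_drop_color[OF c j] by (intro that[of "{e\<in>F. c e \<noteq> j}"]) auto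
qed

lemma edge_colorable_Un:
  assumes "edge_colorable ends a A" "edge_colorable ends b B"
  shows "edge_colorable ends (a + b) (A \<union> B)"
proof -
  obtain cA cB where cA: "proper_edge_coloring ends a A cA" and cB: "proper_edge_coloring ends b B cB"
    using assms by (auto simp: edge_colorable_iff_proper_edge_coloring)
  have "proper_edge_coloring ends (a + b) (A \<union> B) (\<lambda>e. if e \<in> A then cA e else a + cB e)"
    unfolding proper_edge_coloring_def
  proof (intro conjI ballI impI)
    fix e assume "e \<in> A \<union> B"
    then show "(if e \<in> A then cA e else a + cB e) < a + b"
      using cA cB by (auto simp: proper_edge_coloring_def)
  next
    fix e f assume "e \<in> A \<union> B" "f \<in> A \<union> B" "e \<noteq> f \<and> ends e \<inter> ends f \<noteq> {}"
    then show "(if e \<in> A then cA e else a + cB e) \<noteq> (if f \<in> A then cA f else a + cB f)"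
      using cA cB unfolding proper_edge_coloring_def
      by (cases "e \<in> A"; cases "f \<in> A") force+
  qed
  then show ?thesis by (auto simp: edge_colorable_iff_proper_edge_coloring)
qed

definition adjacent_edges :: "('e \<Rightarrow> 'v set) \<Rightarrow> 'e set \<Rightarrow> 'e \<Rightarrow> 'e set" where
  "adjacent_edges ends F e = {f\<in>F. f \<noteq> e \<and> ends e \<inter> ends f \<noteq> {}}"

lemma edge_colorable_greedy:
  assumes "finite F" "\<And>e. e \<in> F \<Longrightarrow> card (adjacent_edges ends F e) < k"
  shows "edge_colorable ends k F"
  using assms
proof (induction F rule: finite_induct)
  case empty
  then show ?case by (simp add: edge_colorable_def)
next
  case (insert x F)
  have mono: "card (adjacent_edges ends F e) \<le> card (adjacent_edges ends (insert x F) e)" for e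
    using insert.hyps(1) by (intro card_mono) (auto simp: adjacent_edges_def)
  have "card (adjacent_edges ends F e) < k" if "e \<in> F" for e
    using mono[of e] insert.prems[of e] that by simp
  then obtain c where c: "proper_edge_coloring ends k F c"
    using insert.IH by (auto simp: edge_colorable_iff_proper_edge_coloring)
  let ?S = "adjacent_edges ends F x"
  have finS: "finite ?S" using insert.hyps(1) by (simp add: adjacent_edges_def)
  have "card (c ` ?S) < k"
    using card_image_le[OF finS, of c] mono[of x] insert.prems[of x] by simp
  have "\<not> {..<k} \<subseteq> c ` ?S"
  proof
    assume "{..<k} \<subseteq> c ` ?S"
    then have "card {..<k} \<le> card (c ` ?S)" by (rule card_mono[OF finite_imageI[OF finS]])
    with \<open>card (c ` ?S) < k\<close> show False by simp
  qed
  then obtain col where col: "col < k" "col \<notin> c ` ?S" by blast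
  have "proper_edge_coloring ends k (insert x F) (c(x := col))"
    unfolding proper_edge_coloring_def
  proof (intro conjI ballI impI)
    fix e assume "e \<in> insert x F"
    then show "(c(x := col)) e < k" using c col(1) by (auto simp: proper_edge_coloring_def)
  next
    fix e f assume e: "e \<in> insert x F" and f: "f \<in> insert x F"
      and ef: "e \<noteq> f \<and> ends e \<inter> ends f \<noteq> {}"
    consider "e = x" | "f = x" | "e \<in> F" "f \<in> F" "e \<noteq> x" "f \<noteq> x" using e f by blast
    then show "(c(x := col)) e \<noteq> (c(x := col)) f"
    proof cases
      case 1
      then have "f \<in> ?S" using f ef by (auto simp: adjacent_edges_def)
      then show ?thesis using 1 ef col(2) by auto
    next
      case 2
      then have "e \<in> ?S" using e ef by (auto simp: adjacent_edges_def Int_commute)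
      then show ?thesis using 2 ef col(2) by auto
    next
      case 3
      then show ?thesis using c ef unfolding proper_edge_coloring_def by simp
    qed
  qed
  then show ?case by (auto simp: edge_colorable_iff_proper_edge_coloring)
qed

lemma finite_nu_candidates:
  assumes "finite E"
  shows "finite {card F | F. F \<subseteq> E \<and> edge_colorable ends k F}"
  by (rule finite_subset[of _ "{..card E}"]) (auto intro: card_mono assms)

lemma card_le_nu:
  assumes "finite E" "F \<subseteq> E" "edge_colorable ends k F"
  shows "card F \<le> nu k E ends"
  unfolding nu_def using assms by (intro Max_ge finite_nu_candidates) auto

lemma nu_attained:
  assumes "finite E"
  obtains F where "F \<subseteq> E" "edge_colorable ends k F" "card F = nu k E ends"
proof -
  have "edge_colorable ends k {}" by (simp add: edge_colorable_def)
  then have "{card F | F. F \<subseteq> E \<and> edge_colorable ends k F} \<noteq> {}" by blast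
  from Max_in[OF finite_nu_candidates[OF assms] this] show ?thesis
    using that unfolding nu_def by auto
qed

lemma nu_Suc_le:
  assumes "finite E"
  shows "k * nu (Suc k) E ends \<le> Suc k * nu k E ends"
proof -
  obtain F where F: "F \<subseteq> E" "edge_colorable ends (Suc k) F" "card F = nu (Suc k) E ends"
    by (rule nu_attained[OF assms])
  obtain F' where F': "F' \<subseteq> F" "edge_colorable ends k F'" "k * card F \<le> Suc k * card F'"
    by (rule drop_small_color_class[OF finite_subset[OF F(1) assms] F(2)])
  have "card F' \<le> nu k E ends"
    using F'(1,2) F(1) by (intro card_le_nu[OF assms]) auto
  then show ?thesis
    using F(3) F'(3) by (metis le_trans mult_le_mono2)
qed

lemma sum_degrees_eq_twice_card:
  assumes "multigraph V E ends" "F \<subseteq> E"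
  shows "(\<Sum>v\<in>V. card {e\<in>F. v \<in> ends e}) = 2 * card F"
proof -
  have fin: "finite V" "finite F" and ends: "\<And>e. e \<in> F \<Longrightarrow> ends e \<subseteq> V \<and> card (ends e) = 2"
    using assms finite_subset by (auto simp: multigraph_def)
  have "(\<Sum>v\<in>V. card {e\<in>F. v \<in> ends e}) = (\<Sum>v\<in>V. \<Sum>e\<in>F. if v \<in> ends e then 1 else 0)"
    using fin by (simp add: sum.inter_filter[symmetric])
  also have "\<dots> = (\<Sum>e\<in>F. \<Sum>v\<in>V. if v \<in> ends e then 1 else 0)"
    by (rule sum.swap)
  also have "\<dots> = (\<Sum>e\<in>F. card {v\<in>V. v \<in> ends e})"
    using fin by (simp add: sum.inter_filter[symmetric])
  also have "\<dots> = (\<Sum>e\<in>F. card (ends e))"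
  proof (rule sum.cong)
    fix e assume "e \<in> F"
    then have "{v\<in>V. v \<in> ends e} = ends e" using ends by auto
    then show "card {v\<in>V. v \<in> ends e} = card (ends e)" by simp
  qed simp
  also have "\<dots> = 2 * card F"
    using ends by simp
  finally show ?thesis .
qed

lemma card_perfect_matching:
  assumes "multigraph V E ends" "perfect_matching V E ends M"
  shows "card V = 2 * card M"
  using sum_degrees_eq_twice_card[OF assms(1), of M] assms(2)
  by (simp add: perfect_matching_def)

lemma edge_colorable_perfect_matching:
  assumes "multigraph V E ends" "perfect_matching V E ends M"
  shows "edge_colorable ends 1 M"
  unfolding edge_colorable_def
proof (intro exI[of _ "\<lambda>_. 0"] conjI ballI impI)
  fix e f assume ef: "e \<in> M" "f \<in> M" "e \<noteq> f \<and> ends e \<inter> ends f \<noteq> {}"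
  then obtain v where v: "v \<in> ends e" "v \<in> ends f" by blast
  with ef assms have "card {g\<in>M. v \<in> ends g} = 1"
    by (auto simp: perfect_matching_def multigraph_def)
  moreover have "{e, f} \<subseteq> {g\<in>M. v \<in> ends g}" using ef v by auto
  ultimately have False
    using ef by (metis card_1_singletonE insert_subset singletonD)
  then show "(0::nat) \<noteq> 0" ..
qed simp

lemma degree_cubic_minus_perfect_matching:
  assumes "cubic V E ends" "perfect_matching V E ends M" "v \<in> V"
  shows "card {e\<in>E - M. v \<in> ends e} = 2"
proof -
  have "{e\<in>E - M. v \<in> ends e} = {e\<in>E. v \<in> ends e} - {e\<in>M. v \<in> ends e}" by auto
  moreover have "{e\<in>M. v \<in> ends e} \<subseteq> {e\<in>E. v \<in> ends e}" "finite {e\<in>E. v \<in> ends e}"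
    using assms by (auto simp: perfect_matching_def cubic_def multigraph_def)
  ultimately show ?thesis
    using assms by (simp add: card_Diff_subset finite_subset cubic_def degree_def perfect_matching_def)
qed

lemma edge_colorable_of_degree_le:
  assumes "multigraph V E ends" "F \<subseteq> E" "\<And>v. v \<in> V \<Longrightarrow> card {e\<in>F. v \<in> ends e} \<le> d"
  shows "edge_colorable ends (2 * d - 1) F"
proof (rule edge_colorable_greedy)
  show fin: "finite F" using assms(1,2) finite_subset by (auto simp: multigraph_def)
  fix e assume "e \<in> F"
  then have "ends e \<subseteq> V" "card (ends e) = 2"
    using assms(1,2) by (auto simp: multigraph_def)
  then obtain u w where uw: "ends e = {u, w}" "u \<in> V" "w \<in> V"
    unfolding card_2_iff by blast
  let ?others = "\<lambda>x. {f\<in>F. x \<in> ends f} - {e}"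
  have others: "card (?others x) \<le> d - 1" if "x \<in> ends e" "x \<in> V" for x
    using assms(3)[OF that(2)] \<open>e \<in> F\<close> that(1) fin by simp
  have "0 < card {f\<in>F. u \<in> ends f}" using \<open>e \<in> F\<close> uw(1) fin by (auto simp: card_gt_0_iff)
  then have "1 \<le> d" using assms(3)[OF uw(2)] by linarith
  have "adjacent_edges ends F e \<subseteq> ?others u \<union> ?others w"
    using uw(1) by (auto simp: adjacent_edges_def)
  then have "card (adjacent_edges ends F e) \<le> card (?others u \<union> ?others w)"
    by (rule card_mono[rotated]) (use fin in auto)
  also have "\<dots> \<le> card (?others u) + card (?others w)"
    by (rule card_Un_le)
  also have "\<dots> \<le> 2 * (d - 1)"
    using others[of u] others[of w] uw by simp
  finally show "card (adjacent_edges ends F e) < 2 * d - 1" using \<open>1 \<le> d\<close> by linarith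
qed

lemma cubic_nu2_lower_bound:
  assumes "cubic V E ends" "perfect_matching V E ends M"
  shows "5 * card V \<le> 6 * nu 2 E ends"
proof -
  have G: "multigraph V E ends" using assms(1) by (simp add: cubic_def)
  then have finE: "finite E" by (simp add: multigraph_def)
  have M: "M \<subseteq> E" using assms(2) by (simp add: perfect_matching_def)
  have "edge_colorable ends 3 (E - M)"
    using edge_colorable_of_degree_le[OF G, of "E - M" 2]
      degree_cubic_minus_perfect_matching[OF assms] by simp
  then obtain K where K: "K \<subseteq> E - M" "edge_colorable ends 1 K" "card (E - M) \<le> 3 * card K"
    by (rule large_color_class[rotated 2]) (use finE in auto)
  have "2 * card (E - M) = 2 * card V"
    using sum_degrees_eq_twice_card[OF G, of "E - M"]
      degree_cubic_minus_perfect_matching[OF assms] by simp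
  moreover have "card V = 2 * card M" by (rule card_perfect_matching[OF G assms(2)])
  moreover have "card (M \<union> K) = card M + card K"
    using K(1) finE M by (intro card_Un_disjoint) (auto intro: finite_subset)
  moreover have "card (M \<union> K) \<le> nu 2 E ends"
  proof (rule card_le_nu[OF finE])
    show "M \<union> K \<subseteq> E" using K(1) M by auto
    show "edge_colorable ends 2 (M \<union> K)"
      using edge_colorable_Un[OF edge_colorable_perfect_matching[OF G assms(2)] K(2)]
      unfolding one_add_one .
  qed
  ultimately show ?thesis using K(3) by linarith
qed

theorem theorem5:
  fixes V :: "'v set" and E :: "'e set" and ends :: "'e \<Rightarrow> 'v set"
  assumes "cubic V E ends"
    and "\<exists>M. perfect_matching V E ends M"
  shows "real (nu 2 E ends) \<ge> 20 / 21 * ((real (card V) + 2 * real (nu 3 E ends)) / 4)"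
proof -
  obtain M where "perfect_matching V E ends M" using assms(2) by blast
  then have "5 * card V \<le> 6 * nu 2 E ends"
    by (rule cubic_nu2_lower_bound[OF assms(1)])
  moreover have "2 * nu 3 E ends \<le> 3 * nu 2 E ends"
    using nu_Suc_le[of E 2 ends] assms(1) by (simp add: cubic_def multigraph_def numeral_3_eq_3)
  ultimately have "5 * real (card V) \<le> 6 * real (nu 2 E ends)"
    and "2 * real (nu 3 E ends) \<le> 3 * real (nu 2 E ends)"
    by linarith+
  then show ?thesis by (simp add: field_simps)
qed

end
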